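(* If $J$ is a subcomplex of a simplicial complex $K$ which is flag and full in $K$, then $J$ is a 3-convex subcomplex of $K'_J$. In particular, if $J$ is a full subcomplex of a flag complex $K$, then $J$ is 3-convex in $K'_J$.
   Context: $K'_J$ (barycentric subdivision of $K$ relative to $J$): vertices are vertices of $J$ and barycenters $b(\sigma)$ of simplices $\sigma$ of $K$ not in $J$; simplices are spanned by sets $\{v_1,\dots,v_q,b(\sigma_1),\dots,b(\sigma_p)\}$ with $v_1,\dots,v_q$ spanning a simplex $\tau$ of $J$ (possibly empty), $\sigma_i\not\subset J$, and $\tau\subset\sigma_1\subset\dots\subset\sigma_p$. A subcomplex $J\subset L$ is 3-convex if it is full and for any two vertices of $J$ at edge-path distance 2 in $L$, every edge path of length 2 in $L$ joining them lies in $J$. *)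

theory Defs
  imports Main
begin

definition simplicial_complex :: "'a set set \<Rightarrow> bool" where
  "simplicial_complex K \<longleftrightarrow>
     (\<forall>s\<in>K. finite s \<and> s \<noteq> {}) \<and> (\<forall>s\<in>K. \<forall>t. t \<subseteq> s \<and> t \<noteq> {} \<longrightarrow> t \<in> K)"

definition vertices :: "'a set set \<Rightarrow> 'a set" where
  "vertices K = \<Union>K"

definition subcomplex :: "'a set set \<Rightarrow> 'a set set \<Rightarrow> bool" where
  "subcomplex J K \<longleftrightarrow> simplicial_complex J \<and> J \<subseteq> K"

definition full_in :: "'a set set \<Rightarrow> 'a set set \<Rightarrow> bool" where
  "full_in J K \<longleftrightarrow> (\<forall>s\<in>K. s \<subseteq> vertices J \<longrightarrow> s \<in> J)"

definition flag :: "'a set set \<Rightarrow> bool" where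
  "flag K \<longleftrightarrow> (\<forall>s. finite s \<and> s \<noteq> {} \<and> s \<subseteq> vertices K \<and>
      (\<forall>x\<in>s. \<forall>y\<in>s. x \<noteq> y \<longrightarrow> {x, y} \<in> K) \<longrightarrow> s \<in> K)"

text \<open>A vertex v of J is represented by
  Inl v, the barycenter b(sigma) of a simplex sigma of K not in J by Inr sigma.\<close>
definition rel_barycentric :: "'a set set \<Rightarrow> 'a set set \<Rightarrow> ('a + 'a set) set set" where
  "rel_barycentric K J =
     {Inl ` \<tau> \<union> Inr ` S | \<tau> S.
        (\<tau> = {} \<or> \<tau> \<in> J) \<and> finite S \<and> S \<subseteq> K - J \<and>
        (\<forall>\<sigma>\<in>S. \<tau> \<subseteq> \<sigma>) \<and>
        (\<forall>\<sigma>1\<in>S. \<forall>\<sigma>2\<in>S. \<sigma>1 \<subseteq> \<sigma>2 \<or> \<sigma>2 \<subseteq> \<sigma>1) \<and>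
        (\<tau> \<noteq> {} \<or> S \<noteq> {})}"

definition embed_J :: "'a set set \<Rightarrow> ('a + 'a set) set set" where
  "embed_J J = (\<lambda>s. Inl ` s) ` J"

definition is_edge :: "'b set set \<Rightarrow> 'b \<Rightarrow> 'b \<Rightarrow> bool" where
  "is_edge L x y \<longleftrightarrow> x \<noteq> y \<and> {x, y} \<in> L"

definition dist2 :: "'b set set \<Rightarrow> 'b \<Rightarrow> 'b \<Rightarrow> bool" where
  "dist2 L u v \<longleftrightarrow> u \<noteq> v \<and> \<not> is_edge L u v \<and> (\<exists>w. is_edge L u w \<and> is_edge L w v)"

definition three_convex :: "'b set set \<Rightarrow> 'b set set \<Rightarrow> bool" where
  "three_convex J L \<longleftrightarrow> subcomplex J L \<and> full_in J L \<and>
     (\<forall>u\<in>vertices J. \<forall>v\<in>vertices J. dist2 L u v \<longrightarrow>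
        (\<forall>w. is_edge L u w \<and> is_edge L w v \<longrightarrow> {u, w} \<in> J \<and> {w, v} \<in> J))"

end

theory Submission
  imports Defs
begin

text \<open>In \<open>K'\<^sub>J\<close> two vertices of \<open>J\<close> are adjacent exactly when they are adjacent in \<open>J\<close>,
  and a barycentre \<open>b(\<sigma>)\<close> is adjacent to a vertex \<open>x\<close> of \<open>J\<close> only if \<open>x \<in> \<sigma>\<close>.  Hence the middle
  vertex of a path \<open>u, w, v\<close> between vertices of \<open>J\<close> at distance 2 cannot be a barycentre:
  otherwise \<open>u, v \<in> \<sigma> \<in> K\<close>, so \<open>{u, v} \<in> K\<close>, and fullness of \<open>J\<close> would make \<open>u, v\<close> adjacent.
  So the path runs in \<open>J\<close>.\<close>

lemma rel_barycentricE:
  assumes "s \<in> rel_barycentric K J"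
  obtains \<tau> S where "s = Inl ` \<tau> \<union> Inr ` S" "\<tau> = {} \<or> \<tau> \<in> J" "S \<subseteq> K - J"
    "\<forall>\<sigma>\<in>S. \<tau> \<subseteq> \<sigma>" "\<tau> \<noteq> {} \<or> S \<noteq> {}"
  using assms unfolding rel_barycentric_def mem_Collect_eq by metis

lemma Inl_image_in_rel_barycentric:
  assumes "t \<in> J" "t \<noteq> {}"
  shows "Inl ` t \<in> rel_barycentric K J"
  unfolding rel_barycentric_def using assms
  by (intro CollectI exI[of _ t] exI[of _ "{}"]) simp

lemma rel_barycentric_edge_Inl_Inl:
  assumes "{Inl x, Inl y} \<in> rel_barycentric K J"
  shows "{x, y} \<in> J"
proof -
  obtain \<tau> and S :: "'a set set" where eq: "{Inl x, Inl y} = Inl ` \<tau> \<union> Inr ` S"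
    and "\<tau> = {} \<or> \<tau> \<in> J"
    using assms by (rule rel_barycentricE)
  have "S = {}" using eq by blast
  with eq have "\<tau> = {x, y}" by (auto simp: inj_image_eq_iff)
  with \<open>\<tau> = {} \<or> \<tau> \<in> J\<close> show ?thesis by simp
qed

lemma rel_barycentric_edge_Inl_Inr:
  assumes "{Inl x, Inr \<sigma>} \<in> rel_barycentric K J"
  shows "x \<in> \<sigma>" "\<sigma> \<in> K"
proof -
  obtain \<tau> S where eq: "{Inl x, Inr \<sigma>} = Inl ` \<tau> \<union> Inr ` S"
    and "S \<subseteq> K - J" "\<forall>\<sigma>\<in>S. \<tau> \<subseteq> \<sigma>"
    using assms by (rule rel_barycentricE)
  have "x \<in> \<tau>" "\<sigma> \<in> S" using eq by blast+
  then show "x \<in> \<sigma>" "\<sigma> \<in> K" using \<open>S \<subseteq> K - J\<close> \<open>\<forall>\<sigma>\<in>S. \<tau> \<subseteq> \<sigma>\<close> by blast+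
qed

lemma vertices_embed_J: "vertices (embed_J J) = Inl ` vertices J"
  unfolding vertices_def embed_J_def by blast

lemma Inl_pair_in_embed_J: "{x, y} \<in> J \<Longrightarrow> {Inl x, Inl y} \<in> embed_J J"
  unfolding embed_J_def by (rule image_eqI[of _ _ "{x, y}"]) simp_all

lemma simplicial_complex_embed_J:
  assumes "simplicial_complex J"
  shows "simplicial_complex (embed_J J)"
  unfolding simplicial_complex_def
proof (intro conjI ballI allI impI)
  fix s assume "s \<in> embed_J J"
  then show "finite s" "s \<noteq> {}"
    using assms unfolding simplicial_complex_def embed_J_def by auto
next
  fix s u assume s: "s \<in> embed_J J" and u: "u \<subseteq> s \<and> u \<noteq> {}"
  then obtain t where t: "t \<in> J" "s = Inl ` t" unfolding embed_J_def by blast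
  define v where "v = {a. Inl a \<in> u}"
  have "u = Inl ` v" "v \<subseteq> t" "v \<noteq> {}" using u t unfolding v_def by auto
  with t assms show "u \<in> embed_J J"
    unfolding simplicial_complex_def embed_J_def by blast
qed

lemma embed_J_subset_rel_barycentric:
  assumes "simplicial_complex J"
  shows "embed_J J \<subseteq> rel_barycentric K J"
proof
  fix s assume "s \<in> embed_J J"
  then obtain t where "t \<in> J" "s = Inl ` t" unfolding embed_J_def by blast
  moreover have "t \<noteq> {}" using \<open>t \<in> J\<close> assms unfolding simplicial_complex_def by blast
  ultimately show "s \<in> rel_barycentric K J" using Inl_image_in_rel_barycentric by blast
qed

lemma subcomplex_embed_J_rel_barycentric:
  assumes "simplicial_complex J"
  shows "subcomplex (embed_J J) (rel_barycentric K J)"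
  unfolding subcomplex_def
  using simplicial_complex_embed_J embed_J_subset_rel_barycentric assms by blast

lemma full_in_embed_J_rel_barycentric: "full_in (embed_J J) (rel_barycentric K J)"
  unfolding full_in_def
proof (intro ballI impI)
  fix s assume s: "s \<in> rel_barycentric K J" and sub: "s \<subseteq> vertices (embed_J J)"
  obtain \<tau> S where eq: "s = Inl ` \<tau> \<union> Inr ` S" and "\<tau> = {} \<or> \<tau> \<in> J"
    and "\<tau> \<noteq> {} \<or> S \<noteq> {}"
    using s by (rule rel_barycentricE)
  have "S = {}" using sub eq unfolding vertices_embed_J by blast
  with eq have "s = Inl ` \<tau>" "\<tau> \<in> J"
    using \<open>\<tau> = {} \<or> \<tau> \<in> J\<close> \<open>\<tau> \<noteq> {} \<or> S \<noteq> {}\<close> by auto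
  then show "s \<in> embed_J J" unfolding embed_J_def by blast
qed

lemma common_barycentric_neighbour_in_J:
  assumes "simplicial_complex K" "full_in J K" "x \<in> vertices J" "y \<in> vertices J"
    and "{Inl x, Inr \<sigma>} \<in> rel_barycentric K J" "{Inl y, Inr \<sigma>} \<in> rel_barycentric K J"
  shows "{x, y} \<in> J"
proof -
  have "{x, y} \<subseteq> \<sigma>" "\<sigma> \<in> K"
    using rel_barycentric_edge_Inl_Inr[OF assms(5)] rel_barycentric_edge_Inl_Inr[OF assms(6)]
    by simp_all
  then have "{x, y} \<in> K"
    using \<open>simplicial_complex K\<close> unfolding simplicial_complex_def by blast
  then show ?thesis using assms(2-4) unfolding full_in_def by simp
qed

lemma path2_in_embed_J:
  assumes K: "simplicial_complex K" and J: "simplicial_complex J" and full: "full_in J K"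
    and x: "x \<in> vertices J" and y: "y \<in> vertices J"
    and d: "dist2 (rel_barycentric K J) (Inl x) (Inl y)"
    and "is_edge (rel_barycentric K J) (Inl x) w" "is_edge (rel_barycentric K J) w (Inl y)"
  shows "{Inl x, w} \<in> embed_J J \<and> {w, Inl y} \<in> embed_J J"
proof -
  have e1: "{Inl x, w} \<in> rel_barycentric K J" and e2: "{Inl y, w} \<in> rel_barycentric K J"
    using assms(7,8) unfolding is_edge_def by (simp_all add: insert_commute)
  show ?thesis
  proof (cases w)
    case (Inl z)
    have "{x, z} \<in> J" "{y, z} \<in> J"
      using e1 e2 unfolding Inl by (auto intro: rel_barycentric_edge_Inl_Inl)
    then show ?thesis using Inl by (simp add: insert_commute Inl_pair_in_embed_J)
  next
    case (Inr \<sigma>)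
    have "{x, y} \<in> J"
      using common_barycentric_neighbour_in_J[OF K full x y] e1 e2 unfolding Inr .
    then have "{Inl x, Inl y} \<in> rel_barycentric K J"
      by (rule subsetD[OF embed_J_subset_rel_barycentric[OF J] Inl_pair_in_embed_J])
    with d show ?thesis unfolding dist2_def is_edge_def by blast
  qed
qed

theorem three_convex_embed_J_rel_barycentric:
  assumes "simplicial_complex K" "subcomplex J K" "full_in J K"
  shows "three_convex (embed_J J) (rel_barycentric K J)"
proof -
  have J: "simplicial_complex J" using assms(2) by (simp add: subcomplex_def)
  have "\<forall>u\<in>vertices (embed_J J). \<forall>v\<in>vertices (embed_J J). dist2 (rel_barycentric K J) u v \<longrightarrow>
          (\<forall>w. is_edge (rel_barycentric K J) u w \<and> is_edge (rel_barycentric K J) w v \<longrightarrow>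
             {u, w} \<in> embed_J J \<and> {w, v} \<in> embed_J J)"
    unfolding vertices_embed_J using path2_in_embed_J[OF assms(1) J assms(3)] by blast
  then show ?thesis
    unfolding three_convex_def
    using subcomplex_embed_J_rel_barycentric[OF J] full_in_embed_J_rel_barycentric by blast
qed

theorem lemma4p5:
  fixes K J :: "'a set set"
  assumes "simplicial_complex K"
  shows "(subcomplex J K \<and> flag J \<and> full_in J K \<longrightarrow>
            three_convex (embed_J J) (rel_barycentric K J)) \<and>
         (subcomplex J K \<and> flag K \<and> full_in J K \<longrightarrow>
            three_convex (embed_J J) (rel_barycentric K J))"
  using three_convex_embed_J_rel_barycentric[OF assms] by blast

end
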